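(* Fix integers $d\geq 2$ and $n\geq d+2$. For every configuration $X=\{x_i\}_{i\in[n]}$ of $n$ points on the unit sphere $S^{d-1}\subseteq\mathbb{R}^d$, it holds that $\delta(X)\leq 1$. Furthermore, $\delta(X)=1$ if and only if $\alpha(X)=0$. Consequently, when $d+2\leq n\leq 2d$, the $n$-point softmax codes in $S^{d-1}$ are precisely the $n$-point spherical codes in $S^{d-1}$.
   Context: $[n]=\{1,\ldots,n\}$. For a configuration $X=\{x_i\}_{i\in[n]}$ in $S^{d-1}$, define $\delta(X):=\min_{j\in[n]}\operatorname{dist}(x_j,\operatorname{conv}\{x_i\}_{i\in[n]\setminus\{j\}})$ (Euclidean distance to the convex hull of the other points) and $\alpha(X):=\max_{i\neq j}\langle x_i,x_j\rangle$. An $n$-point configuration in $S^{d-1}$ is a softmax code if it maximizes $\delta$ over all $n$-point configurations in $S^{d-1}$, and a spherical code if it minimizes $\alpha$ over all $n$-point configurations in $S^{d-1}$. (It is known that for $n\ge d+2$ one always has $\alpha(X)\ge 0$, with equality achievable iff $n\le 2d$.) *)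

theory Defs
  imports "HOL-Analysis.Analysis"
begin

definition sphere_config :: "nat \<Rightarrow> (nat \<Rightarrow> real^'d) \<Rightarrow> bool" where
  "sphere_config n x \<longleftrightarrow> (\<forall>i\<in>{1..n}. norm (x i) = 1)"

definition delta :: "nat \<Rightarrow> (nat \<Rightarrow> real^'d) \<Rightarrow> real" where
  "delta n x = Min ((\<lambda>j. infdist (x j) (convex hull (x ` ({1..n} - {j})))) ` {1..n})"

definition alpha :: "nat \<Rightarrow> (nat \<Rightarrow> real^'d) \<Rightarrow> real" where
  "alpha n x = Max {x i \<bullet> x j | i j. i \<in> {1..n} \<and> j \<in> {1..n} \<and> i \<noteq> j}"

definition softmax_code :: "nat \<Rightarrow> (nat \<Rightarrow> real^'d) \<Rightarrow> bool" where
  "softmax_code n x \<longleftrightarrow> sphere_config n x \<and>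
     (\<forall>y::nat \<Rightarrow> real^'d. sphere_config n y \<longrightarrow> delta n y \<le> delta n x)"

definition spherical_code :: "nat \<Rightarrow> (nat \<Rightarrow> real^'d) \<Rightarrow> bool" where
  "spherical_code n x \<longleftrightarrow> sphere_config n x \<and>
     (\<forall>y::nat \<Rightarrow> real^'d. sphere_config n y \<longrightarrow> alpha n x \<le> alpha n y)"

end

theory Submission
  imports Defs
begin

text \<open>The key is a point q that lies, for every j, in the convex hull of X without x_j, and
  satisfies |q|^2 <= alpha(X). If two points of X coincide, q can be taken to be that point.
  Otherwise n >= d + 2 distinct points are affinely dependent, and a Radon partition X = M \<union> P
  gives q in conv M \<inter> conv P: removing one point of X leaves M or P intact, and
  |q|^2 <= alpha(X) because q is a convex combination both of M and of P. Some x_j satisfies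
  <x_j, q> >= |q|^2, whence delta(X)^2 <= |x_j - q|^2 <= 1 - |q|^2. Thus delta(X) <= 1 and
  alpha(X) >= 0.

  If delta(X) = 1 then q = 0, so 0 and x_i lie in the hull of X without x_j; if <x_i, x_j> = t > 0,
  the point t x_i of that hull is at distance sqrt(1 - t^2) < 1 from x_j. Conversely, alpha(X) = 0
  puts the hull of X without x_j into the half-space <x_j, y> <= 0, at distance >= 1 from x_j.
  For n <= 2d the vectors +-e_k attain alpha = 0, so softmax codes and spherical codes are both
  exactly the configurations with alpha = 0.\<close>

lemma power2_norm_diff_unit:
  fixes y q :: "'a::real_inner"
  assumes "norm y = 1"
  shows "(norm (y - q))\<^sup>2 = 1 - 2 * (y \<bullet> q) + q \<bullet> q"
proof -
  have "y \<bullet> y = 1" using assms by (simp add: norm_eq_1)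
  then show ?thesis
    by (simp add: power2_norm_eq_inner inner_diff_left inner_diff_right inner_commute)
qed

lemma convex_hull_inner_le:
  fixes a :: "'a::real_inner"
  assumes "q \<in> convex hull S" and "\<And>y. y \<in> S \<Longrightarrow> a \<bullet> y \<le> b"
  shows "a \<bullet> q \<le> b"
proof -
  have "convex hull S \<subseteq> {z. a \<bullet> z \<le> b}"
    using assms(2) by (intro hull_minimal) (auto simp: convex_halfspace_le)
  then show ?thesis using assms(1) by blast
qed

lemma convex_hull_exists_inner_ge:
  fixes a :: "'a::real_inner"
  assumes "q \<in> convex hull S"
  shows "\<exists>y\<in>S. a \<bullet> q \<le> a \<bullet> y"
proof (rule ccontr)
  assume "\<not> ?thesis"
  then have "convex hull S \<subseteq> {z. a \<bullet> z < a \<bullet> q}"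
    by (intro hull_minimal) (auto simp: convex_halfspace_lt)
  then show False using assms by blast
qed

lemma infdist_unit_ge_1:
  fixes a :: "'a::real_inner"
  assumes "norm a = 1" and "S \<noteq> {}" and "\<And>y. y \<in> S \<Longrightarrow> a \<bullet> y \<le> 0"
  shows "1 \<le> infdist a S"
proof -
  have "1 \<le> dist a y" if "y \<in> S" for y
  proof -
    have "1 \<le> (norm (a - y))\<^sup>2"
      using assms(3)[OF that] power2_norm_diff_unit[OF assms(1), of y] inner_ge_zero[of y]
      by linarith
    then show ?thesis using power2_le_imp_le[of 1 "norm (a - y)"] by (simp add: dist_norm)
  qed
  then show ?thesis using assms(2) by (simp add: infdist_notempty cINF_greatest)
qed

lemma infdist_unit_lt_1:
  fixes a b :: "'a::real_inner"
  assumes a: "norm a = 1" and b: "norm b = 1" and ab: "0 < a \<bullet> b"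
    and S: "convex S" "0 \<in> S" "b \<in> S"
  shows "infdist a S < 1"
proof -
  define t where "t = a \<bullet> b"
  have "t \<le> 1" using norm_cauchy_schwarz[of a b] a b by (simp add: t_def)
  then have "(1 - t) *\<^sub>R 0 + t *\<^sub>R b \<in> S"
    using S ab by (intro convexD) (auto simp: t_def)
  then have tb: "t *\<^sub>R b \<in> S" by simp
  have "(norm (a - t *\<^sub>R b))\<^sup>2 = 1 - t\<^sup>2"
    using power2_norm_diff_unit[OF a, of "t *\<^sub>R b"] b
    by (simp add: t_def norm_eq_1 power2_eq_square)
  also have "\<dots> < 1" using ab by (simp add: t_def)
  finally have "dist a (t *\<^sub>R b) < 1"
    using power2_less_imp_less[of "norm (a - t *\<^sub>R b)" 1] by (simp add: dist_norm)
  then show ?thesis using infdist_le[OF tb, of a] by linarith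
qed

lemma finite_alpha_set:
  fixes x :: "nat \<Rightarrow> 'a::real_inner"
  shows "finite {x i \<bullet> x j | i j. i \<in> {1..n} \<and> j \<in> {1..n} \<and> i \<noteq> j}"
proof (rule finite_subset)
  show "{x i \<bullet> x j | i j. i \<in> {1..n} \<and> j \<in> {1..n} \<and> i \<noteq> j}
      \<subseteq> (\<lambda>(i, j). x i \<bullet> x j) ` ({1..n} \<times> {1..n})"
    by auto
qed (intro finite_imageI, simp)

lemma alpha_ge:
  assumes "i \<in> {1..n}" "j \<in> {1..n}" "i \<noteq> j"
  shows "x i \<bullet> x j \<le> alpha n x"
  unfolding alpha_def using assms by (intro Max_ge[OF finite_alpha_set]) auto

lemma alpha_le:
  assumes "2 \<le> n" and "\<And>i j. i \<in> {1..n} \<Longrightarrow> j \<in> {1..n} \<Longrightarrow> i \<noteq> j \<Longrightarrow> x i \<bullet> x j \<le> a"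
  shows "alpha n x \<le> a"
proof -
  have "x 1 \<bullet> x 2 \<in> {x i \<bullet> x j | i j. i \<in> {1..n} \<and> j \<in> {1..n} \<and> i \<noteq> j}"
    using assms(1) by force
  then show ?thesis
    unfolding alpha_def using assms by (subst Max_le_iff[OF finite_alpha_set]) auto
qed

lemma delta_le:
  assumes "j \<in> {1..n}"
  shows "delta n x \<le> infdist (x j) (convex hull (x ` ({1..n} - {j})))"
  unfolding delta_def using assms by (intro Min_le) auto

lemma delta_ge:
  assumes "1 \<le> n" and "\<And>j. j \<in> {1..n} \<Longrightarrow> c \<le> infdist (x j) (convex hull (x ` ({1..n} - {j})))"
  shows "c \<le> delta n x"
  unfolding delta_def using assms by (subst Min_ge_iff) auto

lemma delta_nonneg: "1 \<le> n \<Longrightarrow> 0 \<le> delta n x"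
  by (rule delta_ge) (auto simp: infdist_nonneg)

lemma radon_common_point_of_other_hulls:
  fixes x :: "nat \<Rightarrow> real^'d"
  assumes inj: "inj_on x {1..n}" and n: "CARD('d) + 2 \<le> n"
  obtains q where "\<And>j. j \<in> {1..n} \<Longrightarrow> q \<in> convex hull (x ` ({1..n} - {j}))"
    and "q \<bullet> q \<le> alpha n x"
proof -
  let ?C = "x ` {1..n}"
  have "affine_dependent ?C"
    using inj n by (intro affine_dependent_biggerset) (auto simp: card_image)
  then obtain M P where MP: "M \<inter> P = {}" "M \<union> P = ?C"
    and "convex hull M \<inter> convex hull P \<noteq> {}"
    using Radon_partition[of ?C] by auto
  then obtain q where qM: "q \<in> convex hull M" and qP: "q \<in> convex hull P" by blast
  have "q \<in> convex hull (x ` ({1..n} - {j}))" if "j \<in> {1..n}" for j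
  proof (cases "x j \<in> M")
    case True
    then have "P \<subseteq> x ` ({1..n} - {j})" using MP by auto
    then show ?thesis using qP hull_mono by blast
  next
    case False
    then have "M \<subseteq> x ` ({1..n} - {j})" using MP by auto
    then show ?thesis using qM hull_mono by blast
  qed
  moreover have "q \<bullet> q \<le> alpha n x"
  proof (rule convex_hull_inner_le[OF qP])
    fix y assume "y \<in> P"
    show "q \<bullet> y \<le> alpha n x"
    proof (rule convex_hull_inner_le[OF qM, of y, unfolded inner_commute[of y]])
      fix z assume "z \<in> M"
      obtain i j where "i \<in> {1..n}" "z = x i" "j \<in> {1..n}" "y = x j"
        using \<open>z \<in> M\<close> \<open>y \<in> P\<close> MP(2) by blast
      moreover have "z \<noteq> y" using \<open>z \<in> M\<close> \<open>y \<in> P\<close> MP(1) by blast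
      ultimately show "z \<bullet> y \<le> alpha n x" using alpha_ge by blast
    qed
  qed
  ultimately show ?thesis by (rule that)
qed

lemma common_point_of_other_hulls:
  fixes x :: "nat \<Rightarrow> real^'d"
  assumes "CARD('d) + 2 \<le> n"
  obtains q where "\<And>j. j \<in> {1..n} \<Longrightarrow> q \<in> convex hull (x ` ({1..n} - {j}))"
    and "q \<bullet> q \<le> alpha n x"
proof (cases "inj_on x {1..n}")
  case True
  show ?thesis by (rule radon_common_point_of_other_hulls[OF True assms]) (rule that)
next
  case False
  then obtain i j where ij: "i \<in> {1..n}" "j \<in> {1..n}" "i \<noteq> j" "x i = x j"
    unfolding inj_on_def by blast
  have "x i \<in> convex hull (x ` ({1..n} - {k}))" if "k \<in> {1..n}" for k
  proof (rule hull_inc)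
    have "i \<in> {1..n} - {k} \<or> j \<in> {1..n} - {k}" using ij(1-3) by blast
    then show "x i \<in> x ` ({1..n} - {k})" using ij(4) by (metis imageI)
  qed
  moreover have "x i \<bullet> x i \<le> alpha n x"
    using alpha_ge[OF ij(1-3), of x] ij(4) by simp
  ultimately show ?thesis by (rule that)
qed

lemma delta_sq_le:
  fixes x :: "nat \<Rightarrow> real^'d"
  assumes sc: "sphere_config n x" and n: "1 \<le> n"
    and q: "\<And>j. j \<in> {1..n} \<Longrightarrow> q \<in> convex hull (x ` ({1..n} - {j}))"
  shows "(delta n x)\<^sup>2 \<le> 1 - q \<bullet> q"
proof -
  have "q \<in> convex hull (x ` {1..n})"
    using q[of 1] n hull_mono[of "x ` ({1..n} - {1})" "x ` {1..n}"] by auto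
  then obtain j where j: "j \<in> {1..n}" and qj: "q \<bullet> q \<le> q \<bullet> x j"
    using convex_hull_exists_inner_ge[of q _ q] by blast
  have "delta n x \<le> dist (x j) q"
    using delta_le[OF j, of x] infdist_le[OF q[OF j], of "x j"] by linarith
  then have "(delta n x)\<^sup>2 \<le> (norm (x j - q))\<^sup>2"
    using delta_nonneg[OF n, of x] by (simp add: dist_norm power_mono)
  also have "\<dots> = 1 - 2 * (x j \<bullet> q) + q \<bullet> q"
    using sc j unfolding sphere_config_def by (simp add: power2_norm_diff_unit)
  also have "\<dots> \<le> 1 - q \<bullet> q"
    using qj by (simp add: inner_commute)
  finally show ?thesis .
qed

lemma delta_le_1:
  fixes x :: "nat \<Rightarrow> real^'d"
  assumes sc: "sphere_config n x" and n: "CARD('d) + 2 \<le> n"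
  shows "delta n x \<le> 1"
proof -
  obtain q where "\<And>j. j \<in> {1..n} \<Longrightarrow> q \<in> convex hull (x ` ({1..n} - {j}))"
    using common_point_of_other_hulls[OF n] by blast
  then have "(delta n x)\<^sup>2 \<le> 1 - q \<bullet> q"
    using n by (intro delta_sq_le[OF sc]) auto
  then have "(delta n x)\<^sup>2 \<le> 1"
    using inner_ge_zero[of q] by linarith
  then show ?thesis
    using abs_square_le_1 by (metis abs_le_D1)
qed

lemma alpha_nonneg:
  fixes x :: "nat \<Rightarrow> real^'d"
  assumes "CARD('d) + 2 \<le> n"
  shows "0 \<le> alpha n x"
proof -
  obtain q :: "real^'d" where "q \<bullet> q \<le> alpha n x"
    using common_point_of_other_hulls[OF assms] by blast
  then show ?thesis using inner_ge_zero[of q] by linarith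
qed

lemma alpha_le_0_if_delta_eq_1:
  fixes x :: "nat \<Rightarrow> real^'d"
  assumes sc: "sphere_config n x" and n: "CARD('d) + 2 \<le> n" and d: "delta n x = 1"
  shows "alpha n x \<le> 0"
proof -
  obtain q where q: "\<And>j. j \<in> {1..n} \<Longrightarrow> q \<in> convex hull (x ` ({1..n} - {j}))"
    using common_point_of_other_hulls[OF n] by blast
  have "q \<bullet> q \<le> 0"
    using delta_sq_le[OF sc _ q] n d by simp
  then have q0: "q = 0" using inner_gt_zero_iff[of q] by linarith
  show ?thesis
  proof (rule alpha_le)
    fix i j assume ij: "i \<in> {1..n}" "j \<in> {1..n}" "i \<noteq> j"
    show "x i \<bullet> x j \<le> 0"
    proof (rule ccontr)
      assume "\<not> x i \<bullet> x j \<le> 0"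
      moreover have "norm (x i) = 1" "norm (x j) = 1"
        using sc ij unfolding sphere_config_def by auto
      moreover have "x i \<in> convex hull (x ` ({1..n} - {j}))"
        using ij by (intro hull_inc) auto
      ultimately have "infdist (x j) (convex hull (x ` ({1..n} - {j}))) < 1"
        using q[OF ij(2)] q0
        by (intro infdist_unit_lt_1) (auto simp: inner_commute)
      then show False using delta_le[OF ij(2), of x] d by simp
    qed
  qed (use n in simp)
qed

lemma delta_ge_1_if_alpha_le_0:
  fixes x :: "nat \<Rightarrow> real^'d"
  assumes sc: "sphere_config n x" and n: "2 \<le> n" and a: "alpha n x \<le> 0"
  shows "1 \<le> delta n x"
proof (rule delta_ge)
  fix j assume j: "j \<in> {1..n}"
  obtain k where k: "k \<in> {1..n} - {j}"
    using n j by (intro that[of "if j = 1 then 2 else 1"]) auto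
  show "1 \<le> infdist (x j) (convex hull (x ` ({1..n} - {j})))"
  proof (rule infdist_unit_ge_1)
    show "norm (x j) = 1" using sc j unfolding sphere_config_def by blast
    show "convex hull (x ` ({1..n} - {j})) \<noteq> {}" using k by auto
  next
    fix y assume "y \<in> convex hull (x ` ({1..n} - {j}))"
    then show "x j \<bullet> y \<le> 0"
    proof (rule convex_hull_inner_le)
      fix z assume "z \<in> x ` ({1..n} - {j})"
      then obtain i where "i \<in> {1..n}" "i \<noteq> j" "z = x i" by blast
      then show "x j \<bullet> z \<le> 0" using alpha_ge[of j n i x] j a by simp
    qed
  qed
qed (use n in simp)

lemma delta_eq_1_iff_alpha_eq_0:
  fixes x :: "nat \<Rightarrow> real^'d"
  assumes sc: "sphere_config n x" and n: "CARD('d) + 2 \<le> n"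
  shows "delta n x = 1 \<longleftrightarrow> alpha n x = 0"
proof
  assume "delta n x = 1"
  then show "alpha n x = 0"
    using alpha_le_0_if_delta_eq_1[OF assms] alpha_nonneg[OF n, of x] by linarith
next
  assume "alpha n x = 0"
  then show "delta n x = 1"
    using delta_ge_1_if_alpha_le_0[OF sc] delta_le_1[OF assms] n by force
qed

text \<open>The cross-polytope: e_1, ..., e_d, -e_1, ..., -e_d, with the coordinates of real^'d
  enumerated by a bijection h from {0..<d}.\<close>

lemma exists_sphere_config_pairwise_inner_le_0:
  assumes "n \<le> 2 * CARD('d::finite)"
  obtains y :: "nat \<Rightarrow> real^'d" where "sphere_config n y"
    and "\<And>i j. i \<in> {1..n} \<Longrightarrow> j \<in> {1..n} \<Longrightarrow> i \<noteq> j \<Longrightarrow> y i \<bullet> y j \<le> 0"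
proof -
  define D where "D = CARD('d)"
  obtain h where "bij_betw h {0..<D} (UNIV :: 'd set)"
    using ex_bij_betw_nat_finite[of "UNIV :: 'd set"] unfolding D_def by auto
  then have h: "inj_on h {0..<D}" by (simp add: bij_betw_def)
  define k where "k i = (if i \<le> D then i - 1 else i - D - 1)" for i :: nat
  define s where "s i = (if i \<le> D then 1 else -1 :: real)" for i :: nat
  define y where "y i = (axis (h (k i)) (s i) :: real^'d)" for i
  have ss: "s i * s i = 1" for i by (simp add: s_def)
  have "y i \<bullet> y j \<le> 0" if ij: "i \<in> {1..n}" "j \<in> {1..n}" "i \<noteq> j" for i j
  proof (cases "s i = s j")
    case True
    then have "k i \<noteq> k j" using ij by (auto simp: k_def s_def split: if_splits)
    moreover have "k i \<in> {0..<D}" "k j \<in> {0..<D}" using ij assms by (auto simp: k_def D_def)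
    ultimately have "h (k i) \<noteq> h (k j)" using h by (meson inj_on_contraD)
    then show ?thesis by (simp add: y_def inner_axis_axis)
  next
    case False
    then have "s i * s j = -1" by (auto simp: s_def split: if_splits)
    then show ?thesis by (simp add: y_def inner_axis_axis)
  qed
  moreover have "sphere_config n y"
    unfolding sphere_config_def y_def by (simp add: norm_eq_1 inner_axis_axis ss)
  ultimately show ?thesis using that by blast
qed

lemma exists_sphere_config_alpha_eq_0:
  assumes n: "CARD('d) + 2 \<le> n" "n \<le> 2 * CARD('d)"
  obtains y :: "nat \<Rightarrow> real^'d" where "sphere_config n y" and "alpha n y = 0"
proof -
  obtain y :: "nat \<Rightarrow> real^'d" where y: "sphere_config n y"
    and "\<And>i j. i \<in> {1..n} \<Longrightarrow> j \<in> {1..n} \<Longrightarrow> i \<noteq> j \<Longrightarrow> y i \<bullet> y j \<le> 0"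
    using exists_sphere_config_pairwise_inner_le_0[OF n(2)] by blast
  then have "alpha n y \<le> 0" using n(1) by (intro alpha_le) auto
  then show ?thesis using that y alpha_nonneg[OF n(1), of y] by simp
qed

lemma spherical_code_iff_alpha_eq_0:
  fixes x :: "nat \<Rightarrow> real^'d"
  assumes "CARD('d) + 2 \<le> n" "n \<le> 2 * CARD('d)"
  shows "spherical_code n x \<longleftrightarrow> sphere_config n x \<and> alpha n x = 0"
proof
  assume "spherical_code n x"
  moreover obtain y :: "nat \<Rightarrow> real^'d" where "sphere_config n y" "alpha n y = 0"
    using exists_sphere_config_alpha_eq_0[OF assms] .
  ultimately have "sphere_config n x" "alpha n x \<le> 0"
    unfolding spherical_code_def by force+
  then show "sphere_config n x \<and> alpha n x = 0"
    using alpha_nonneg[OF assms(1), of x] by simp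
next
  assume "sphere_config n x \<and> alpha n x = 0"
  then show "spherical_code n x"
    unfolding spherical_code_def using alpha_nonneg[OF assms(1)] by simp
qed

lemma softmax_code_iff_delta_eq_1:
  fixes x :: "nat \<Rightarrow> real^'d"
  assumes "CARD('d) + 2 \<le> n" "n \<le> 2 * CARD('d)"
  shows "softmax_code n x \<longleftrightarrow> sphere_config n x \<and> delta n x = 1"
proof
  assume "softmax_code n x"
  moreover obtain y :: "nat \<Rightarrow> real^'d" where y: "sphere_config n y" "alpha n y = 0"
    using exists_sphere_config_alpha_eq_0[OF assms] .
  moreover have "delta n y = 1"
    using delta_eq_1_iff_alpha_eq_0[OF y(1) assms(1)] y(2) by simp
  ultimately have "sphere_config n x" "1 \<le> delta n x"
    unfolding softmax_code_def by force+
  then show "sphere_config n x \<and> delta n x = 1"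
    using delta_le_1[OF _ assms(1), of x] by simp
next
  assume "sphere_config n x \<and> delta n x = 1"
  then show "softmax_code n x"
    unfolding softmax_code_def using delta_le_1[OF _ assms(1)] by simp
qed

theorem theorem2:
  fixes n :: nat
  assumes "CARD('d::finite) \<ge> 2"
    and "n \<ge> CARD('d) + 2"
  shows "(\<forall>x::nat \<Rightarrow> real^'d. sphere_config n x \<longrightarrow> delta n x \<le> 1)
       \<and> (\<forall>x::nat \<Rightarrow> real^'d. sphere_config n x \<longrightarrow> (delta n x = 1 \<longleftrightarrow> alpha n x = 0))
       \<and> (n \<le> 2 * CARD('d) \<longrightarrow>
            (\<forall>x::nat \<Rightarrow> real^'d. softmax_code n x \<longleftrightarrow> spherical_code n x))"
proof (intro conjI allI impI)
  fix x :: "nat \<Rightarrow> real^'d"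
  assume "sphere_config n x"
  then show "delta n x \<le> 1" using assms(2) by (rule delta_le_1)
next
  fix x :: "nat \<Rightarrow> real^'d"
  assume "sphere_config n x"
  then show "delta n x = 1 \<longleftrightarrow> alpha n x = 0" using assms(2) by (rule delta_eq_1_iff_alpha_eq_0)
next
  fix x :: "nat \<Rightarrow> real^'d"
  assume "n \<le> 2 * CARD('d)"
  then show "softmax_code n x \<longleftrightarrow> spherical_code n x"
    using softmax_code_iff_delta_eq_1[OF assms(2)] spherical_code_iff_alpha_eq_0[OF assms(2)]
      delta_eq_1_iff_alpha_eq_0[OF _ assms(2)]
    by blast
qed

end
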